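(* Let $A$ be a unital alternative $*$-algebra over $\mathbb{C}$ with unit $1_A$. Assume that $A$ contains a nontrivial symmetric idempotent $e$ (i.e. $e^2=e=e^*$, $e\neq 0$, $e\neq 1_A$) such that (i) if $x\in A$ and $(xa)e=0$ for all $a\in A$, then $x=0$; and (ii) if $x\in A$ and $(xa)(1_A-e)=0$ for all $a\in A$, then $x=0$. Then a map $\Phi:A\to A$ is a nonlinear $*$-Jordan-type derivation if and only if $\Phi$ is an additive $*$-derivation.
   Context: An algebra $A$ (not necessarily associative) is alternative if $a^2b=a(ab)$ and $ba^2=(ba)a$ for all $a,b\in A$. An involution on $A$ is a map $*:A\to A$ with $(x+y)^*=x^*+y^*$, $(x^* )^*=x$, $(xy)^*=y^*x^*$. For $a,b\in A$ let $a\bullet b=ab+ba^*$, with left-normed iteration $a_1\bullet\cdots\bullet a_n=(\cdots((a_1\bullet a_2)\bullet a_3)\cdots)\bullet a_n$. For a fixed integer $n\ge2$, a (not necessarily additive) map $\Phi:A\to A$ is a nonlinear $*$-Jordan $n$-derivation if $\Phi(a_1\bullet\cdots\bullet a_n)=\sum_{k=1}^n a_1\bullet\cdots\bullet a_{k-1}\bullet\Phi(a_k)\bullet a_{k+1}\bullet\cdots\bullet a_n$ for all $a_1,\dots,a_n\in A$; a nonlinear $*$-Jordan-type derivation is a map that is a nonlinear $*$-Jordan $n$-derivation for some $n\ge 2$. A map $\Phi$ is an additive $*$-derivation if it is additive, $\Phi(ab)=\Phi(a)b+a\Phi(b)$ and $\Phi(a^* )=\Phi(a)^*$ for all $a,b\in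 A$. *)

theory Defs
  imports Complex_Main
begin

definition complex_algebra :: "(complex \<Rightarrow> 'a::ab_group_add \<Rightarrow> 'a) \<Rightarrow> ('a \<Rightarrow> 'a \<Rightarrow> 'a) \<Rightarrow> bool" where
  "complex_algebra sc mul \<longleftrightarrow>
     module sc \<and>
     (\<forall>x y z. mul (x + y) z = mul x z + mul y z) \<and>
     (\<forall>x y z. mul x (y + z) = mul x y + mul x z) \<and>
     (\<forall>c x y. mul (sc c x) y = sc c (mul x y)) \<and>
     (\<forall>c x y. mul x (sc c y) = sc c (mul x y))"

definition alternative :: "('a \<Rightarrow> 'a \<Rightarrow> 'a) \<Rightarrow> bool" where
  "alternative mul \<longleftrightarrow>
     (\<forall>a b. mul (mul a a) b = mul a (mul a b)) \<and>
     (\<forall>a b. mul b (mul a a) = mul (mul b a) a)"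

definition involution :: "('a \<Rightarrow> 'a \<Rightarrow> 'a) \<Rightarrow> ('a::ab_group_add \<Rightarrow> 'a) \<Rightarrow> bool" where
  "involution mul st \<longleftrightarrow>
     (\<forall>x y. st (x + y) = st x + st y) \<and>
     (\<forall>x. st (st x) = x) \<and>
     (\<forall>x y. st (mul x y) = mul (st y) (st x))"

definition unital_alt_star_algebra ::
  "(complex \<Rightarrow> 'a::ab_group_add \<Rightarrow> 'a) \<Rightarrow> ('a \<Rightarrow> 'a \<Rightarrow> 'a) \<Rightarrow> ('a \<Rightarrow> 'a) \<Rightarrow> 'a \<Rightarrow> bool" where
  "unital_alt_star_algebra sc mul st one \<longleftrightarrow>
     complex_algebra sc mul \<and> alternative mul \<and> involution mul st \<and>
     (\<forall>c x. st (sc c x) = sc (cnj c) (st x)) \<and>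
     (\<forall>x. mul one x = x \<and> mul x one = x)"

definition jbullet :: "('a \<Rightarrow> 'a \<Rightarrow> 'a) \<Rightarrow> ('a::ab_group_add \<Rightarrow> 'a) \<Rightarrow> 'a \<Rightarrow> 'a \<Rightarrow> 'a" where
  "jbullet mul st a b = mul a b + mul b (st a)"

definition jprod :: "('a \<Rightarrow> 'a \<Rightarrow> 'a) \<Rightarrow> ('a::ab_group_add \<Rightarrow> 'a) \<Rightarrow> 'a list \<Rightarrow> 'a" where
  "jprod mul st as = foldl (jbullet mul st) (hd as) (tl as)"

definition star_jordan_n_derivation ::
  "('a \<Rightarrow> 'a \<Rightarrow> 'a) \<Rightarrow> ('a::ab_group_add \<Rightarrow> 'a) \<Rightarrow> nat \<Rightarrow> ('a \<Rightarrow> 'a) \<Rightarrow> bool" where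
  "star_jordan_n_derivation mul st n \<Phi> \<longleftrightarrow>
     (\<forall>as. length as = n \<longrightarrow>
        \<Phi> (jprod mul st as) = (\<Sum>k<n. jprod mul st (as[k := \<Phi> (as ! k)])))"

definition star_jordan_type_derivation ::
  "('a \<Rightarrow> 'a \<Rightarrow> 'a) \<Rightarrow> ('a::ab_group_add \<Rightarrow> 'a) \<Rightarrow> ('a \<Rightarrow> 'a) \<Rightarrow> bool" where
  "star_jordan_type_derivation mul st \<Phi> \<longleftrightarrow>
     (\<exists>n\<ge>2. star_jordan_n_derivation mul st n \<Phi>)"

definition additive_star_derivation ::
  "('a \<Rightarrow> 'a \<Rightarrow> 'a) \<Rightarrow> ('a::ab_group_add \<Rightarrow> 'a) \<Rightarrow> ('a \<Rightarrow> 'a) \<Rightarrow> bool" where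
  "additive_star_derivation mul st \<Phi> \<longleftrightarrow>
     (\<forall>x y. \<Phi> (x + y) = \<Phi> x + \<Phi> y) \<and>
     (\<forall>a b. \<Phi> (mul a b) = mul (\<Phi> a) b + mul a (\<Phi> b)) \<and>
     (\<forall>a. \<Phi> (st a) = st (\<Phi> a))"

end

(*
  Since half = sc (1/2) one satisfies half \<bullet> y = y, the left-normed product of half, ..., half, a, b
  is a \<bullet> b. The n-ary identity applied to half, ..., half and to half, ..., half, x shows that
  \<Phi> half \<bullet> x = 0, and then the n-ary identity for half, ..., half, a, b is the binary identity
  \<Phi> (a \<bullet> b) = \<Phi> a \<bullet> b + a \<bullet> \<Phi> b.

  For a solution \<Phi> of the binary identity, additivity is checked on the Peirce decomposition
  A = A11 + A12 + A21 + A22 of e. The defect \<Phi> (x + y) - \<Phi> x - \<Phi> y is compatible with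
  \<bullet>-multiplication, and multiplying it by e, 1 - e, 2e - 1 and i(2e - 1) kills most of its Peirce
  components. What remains is handled by one product identity when x, y lie in A12 (or A21),
  and by conditions (ii) and (i) when x, y lie in A11 (or A22). Once \<Phi> is additive, \<Phi> 1 and
  \<Phi> (i 1) are central with vanishing diagonal Peirce components, hence zero; then \<Phi> preserves *,
  is complex linear, and adding the identities for a \<bullet> b and (i a) \<bullet> b gives
  \<Phi> (a b) = \<Phi> a b + a \<Phi> b.
*)
theory Submission
  imports Defs
begin

lemma sum_lessThan_add: "(\<Sum>i<m + n. f i) = (\<Sum>i<m. f i) + (\<Sum>i<n. f (m + i))"
  for f :: "nat \<Rightarrow> 'a::comm_monoid_add"
  by (induction n) (simp_all add: add.assoc)

lemma replicate_list_update:
  "k < n \<Longrightarrow> (replicate n x)[k := y] = replicate k x @ y # replicate (n - Suc k) x"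
proof (induction n arbitrary: k)
  case (Suc n)
  then show ?case by (cases k) auto
qed simp

locale alt_star_algebra =
  fixes sc :: "complex \<Rightarrow> 'a::ab_group_add \<Rightarrow> 'a"
    and mul :: "'a \<Rightarrow> 'a \<Rightarrow> 'a"  (infixl "\<odot>" 70)
    and st :: "'a \<Rightarrow> 'a"
    and one :: 'a
  assumes unital_alt_star_algebra: "unital_alt_star_algebra sc mul st one"
begin

abbreviation star_bullet :: "'a \<Rightarrow> 'a \<Rightarrow> 'a"  (infixl "\<bullet>" 68)
  where "a \<bullet> b \<equiv> jbullet mul st a b"

lemma vector_space_sc: "vector_space sc"
  using unital_alt_star_algebra module_iff_vector_space
  unfolding unital_alt_star_algebra_def complex_algebra_def by blast

sublocale sc: vector_space sc
  by (rule vector_space_sc)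

lemma mul_add_left: "(x + y) \<odot> z = x \<odot> z + y \<odot> z"
  and mul_add_right: "x \<odot> (y + z) = x \<odot> y + x \<odot> z"
  and mul_scale_left: "sc c x \<odot> y = sc c (x \<odot> y)"
  and mul_scale_right: "x \<odot> sc c y = sc c (x \<odot> y)"
  and left_alternative: "(a \<odot> a) \<odot> b = a \<odot> (a \<odot> b)"
  and right_alternative: "b \<odot> (a \<odot> a) = (b \<odot> a) \<odot> a"
  and st_add: "st (x + y) = st x + st y"
  and st_st [simp]: "st (st x) = x"
  and st_mul: "st (x \<odot> y) = st y \<odot> st x"
  and st_scale: "st (sc c x) = sc (cnj c) (st x)"
  and one_mul [simp]: "one \<odot> x = x"
  and mul_one [simp]: "x \<odot> one = x"
  using unital_alt_star_algebra
  unfolding unital_alt_star_algebra_def complex_algebra_def alternative_def involution_def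
  by auto

lemma additive_mul_left: "additive (\<lambda>x. x \<odot> y)"
  and additive_mul_right: "additive (\<lambda>y. x \<odot> y)"
  and additive_st: "additive st"
  by (simp_all add: additive_def mul_add_left mul_add_right st_add)

lemmas mul_zero_left [simp] = additive.zero[OF additive_mul_left]
  and mul_zero_right [simp] = additive.zero[OF additive_mul_right]
  and mul_minus_left = additive.minus[OF additive_mul_left]
  and mul_minus_right = additive.minus[OF additive_mul_right]
  and mul_diff_left = additive.diff[OF additive_mul_left]
  and mul_diff_right = additive.diff[OF additive_mul_right]
  and st_zero [simp] = additive.zero[OF additive_st]
  and st_minus = additive.minus[OF additive_st]
  and st_diff = additive.diff[OF additive_st]

lemmas mul_distribs = mul_add_left mul_add_right mul_diff_left mul_diff_right
  mul_minus_left mul_minus_right mul_scale_left mul_scale_right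

lemma st_one [simp]: "st one = one"
  using st_mul[of "st one" one] by simp

lemma add_self_eq_0_iff: "x + x = 0 \<longleftrightarrow> x = 0" for x :: 'a
proof -
  have "x + x = sc 2 x"
    using sc.scale_left_distrib[of 1 1 x] by simp
  then show ?thesis
    by simp
qed

lemma left_alternative_linearized: "a \<odot> (c \<odot> b) + c \<odot> (a \<odot> b) = (a \<odot> c) \<odot> b + (c \<odot> a) \<odot> b"
  using left_alternative[of "a + c" b] left_alternative[of a b] left_alternative[of c b]
  by (simp add: mul_add_left mul_add_right algebra_simps)

lemma right_alternative_linearized: "b \<odot> (a \<odot> c) + b \<odot> (c \<odot> a) = (b \<odot> a) \<odot> c + (b \<odot> c) \<odot> a"
  using right_alternative[of b "a + c"] right_alternative[of b a] right_alternative[of b c]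
  by (simp add: mul_add_left mul_add_right algebra_simps)

lemma flexible: "(a \<odot> b) \<odot> a = a \<odot> (b \<odot> a)"
  using left_alternative_linearized[of a b a] right_alternative[of b a]
  by (simp add: algebra_simps)

lemma additive_jbullet_left: "additive (\<lambda>a. a \<bullet> b)"
  and additive_jbullet_right: "additive (\<lambda>b. a \<bullet> b)"
  by (simp_all add: additive_def jbullet_def mul_add_left mul_add_right st_add algebra_simps)

lemmas jbullet_add_left = additive.add[OF additive_jbullet_left]
  and jbullet_add_right = additive.add[OF additive_jbullet_right]
  and jbullet_zero_left [simp] = additive.zero[OF additive_jbullet_left]
  and jbullet_zero_right [simp] = additive.zero[OF additive_jbullet_right]
  and jbullet_diff_left = additive.diff[OF additive_jbullet_left]
  and jbullet_diff_right = additive.diff[OF additive_jbullet_right]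

lemma one_jbullet: "one \<bullet> x = x + x"
  by (simp add: jbullet_def)

lemma jbullet_annihilator:
  assumes "\<And>y. z \<bullet> y = 0"
  shows "st z = - z" and "z \<odot> y = y \<odot> z"
proof -
  show skew: "st z = - z"
    using assms[of one] by (simp add: jbullet_def add_eq_0_iff)
  show "z \<odot> y = y \<odot> z"
    using assms[of y] by (simp add: jbullet_def skew mul_minus_right)
qed

end

section \<open>Reduction to the binary identity\<close>

locale star_jordan_derivation = alt_star_algebra +
  fixes \<Phi> :: "'a \<Rightarrow> 'a"
  assumes jordan: "\<Phi> (a \<bullet> b) = \<Phi> a \<bullet> b + a \<bullet> \<Phi> b"

context alt_star_algebra
begin

abbreviation half :: 'a
  where "half \<equiv> sc (1/2) one"

lemma half_add_half: "sc (1/2) x + sc (1/2) x = x"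
  using sc.scale_left_distrib[of "1/2" "1/2" x] by simp

lemma half_jbullet [simp]: "half \<bullet> y = y"
  by (simp add: jbullet_def st_scale mul_scale_left mul_scale_right half_add_half)

lemma jbullet_half: "y \<bullet> half = sc (1/2) (y + st y)"
  by (simp add: jbullet_def st_scale mul_scale_left mul_scale_right sc.scale_right_distrib)

lemma jbullet_half_half: "(y \<bullet> half) \<bullet> half = y \<bullet> half"
proof -
  have "st (y \<bullet> half) = y \<bullet> half"
    by (simp add: jbullet_half st_scale st_add add.commute)
  then show ?thesis
    by (simp add: jbullet_half[of "y \<bullet> half"] sc.scale_right_distrib half_add_half)
qed

lemma foldl_jbullet_zero: "foldl (\<bullet>) 0 ys = 0"
  by (induction ys) auto

lemma foldl_jbullet_replicate_half: "foldl (\<bullet>) d (replicate (Suc j) half) = d \<bullet> half"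
proof -
  have "foldl (\<bullet>) (y \<bullet> half) (replicate j half) = y \<bullet> half" for y
    by (induction j) (simp_all add: jbullet_half_half)
  then show ?thesis
    by simp
qed

lemma jprod_Cons: "jprod mul st (a # ys) = foldl (\<bullet>) a ys"
  by (simp add: jprod_def)

lemma jprod_replicate_half_append:
  assumes "zs \<noteq> []"
  shows "jprod mul st (replicate k half @ zs) = jprod mul st zs"
proof (cases k)
  case (Suc j)
  have "foldl (\<bullet>) half (replicate j half) = half"
    by (induction j) simp_all
  with Suc assms show ?thesis
    by (cases zs) (simp_all add: jprod_def)
qed simp

lemma star_jordan_n_derivation_half_jbullet_half:
  assumes "2 \<le> n" and J: "star_jordan_n_derivation mul st n \<Phi>"
  shows "\<Phi> half \<bullet> half = 0"
proof -
  from assms(1) obtain m where n: "n = Suc m" and "m \<noteq> 0"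
    by (cases n) auto
  let ?d = "\<Phi> half"
  have entry: "jprod mul st ((replicate n half)[k := ?d]) = (if k = m then ?d else ?d \<bullet> half)"
    if "k < n" for k
  proof -
    have "jprod mul st ((replicate n half)[k := ?d]) = foldl (\<bullet>) ?d (replicate (m - k) half)"
      using that by (simp add: replicate_list_update jprod_replicate_half_append jprod_Cons n del: replicate_Suc)
    then show ?thesis
      using that foldl_jbullet_replicate_half[of ?d "m - Suc k"]
      by (cases "k = m") (simp_all add: n Suc_diff_Suc)
  qed
  have "replicate n half = replicate m half @ [half]"
    by (simp add: n replicate_append_same)
  then have "jprod mul st (replicate n half) = half"
    by (simp add: jprod_replicate_half_append jprod_Cons)
  then have "?d = \<Phi> (jprod mul st (replicate n half))"
    by simp
  also have "\<dots> = (\<Sum>k<n. jprod mul st ((replicate n half)[k := \<Phi> (replicate n half ! k)]))"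
    using J unfolding star_jordan_n_derivation_def by simp
  also have "\<dots> = (\<Sum>k<n. if k = m then ?d else ?d \<bullet> half)"
    by (rule sum.cong) (simp_all add: entry)
  also have "\<dots> = (\<Sum>k<m. ?d \<bullet> half) + ?d"
    by (simp add: n)
  finally have "sc (of_nat m) (?d \<bullet> half) = 0"
    by (simp add: sc.sum_constant_scale)
  with \<open>m \<noteq> 0\<close> show ?thesis
    by simp
qed

lemma star_jordan_n_derivation_replicate_half_append:
  assumes J: "star_jordan_n_derivation mul st (m + length zs) \<Phi>"
    and d: "\<Phi> half \<bullet> half = 0" and zs: "zs \<noteq> []"
  shows "\<Phi> (jprod mul st zs) = (if m = 0 then 0 else jprod mul st (\<Phi> half # zs))
           + (\<Sum>j<length zs. jprod mul st (zs[j := \<Phi> (zs ! j)]))"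
proof -
  define as where "as = replicate m half @ zs"
  let ?term = "\<lambda>k. jprod mul st (as[k := \<Phi> (as ! k)])"
  have prefix: "?term k = (if k = m - 1 then jprod mul st (\<Phi> half # zs) else 0)" if "k < m" for k
  proof -
    have "?term k = foldl (\<bullet>) (\<Phi> half) (replicate (m - Suc k) half @ zs)"
      using that zs
      by (simp add: as_def nth_append list_update_append1 replicate_list_update
          jprod_replicate_half_append jprod_Cons)
    show ?thesis
    proof (cases "k = m - 1")
      case False
      with that have "m - Suc k = Suc (m - Suc (Suc k))"
        by simp
      with \<open>?term k = _\<close> False d show ?thesis
        by (simp add: foldl_jbullet_replicate_half foldl_jbullet_zero)
    qed (use \<open>?term k = _\<close> that in \<open>simp add: jprod_Cons\<close>)
  qed
  have suffix: "?term (m + j) = jprod mul st (zs[j := \<Phi> (zs ! j)])" if "j < length zs" for j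
    using that zs by (simp add: as_def nth_append list_update_append jprod_replicate_half_append)
  have "\<Phi> (jprod mul st zs) = \<Phi> (jprod mul st as)"
    using zs by (simp add: as_def jprod_replicate_half_append)
  also have "\<dots> = (\<Sum>k<m + length zs. ?term k)"
    using J unfolding star_jordan_n_derivation_def as_def by simp
  also have "\<dots> = (\<Sum>k<m. ?term k) + (\<Sum>j<length zs. ?term (m + j))"
    by (rule sum_lessThan_add)
  also have "(\<Sum>k<m. ?term k) = (if m = 0 then 0 else jprod mul st (\<Phi> half # zs))"
    using prefix by simp
  finally show ?thesis
    using suffix by simp
qed

lemma star_jordan_n_derivation_half_jbullet:
  assumes "2 \<le> n" and "star_jordan_n_derivation mul st n \<Phi>"
  shows "\<Phi> half \<bullet> x = 0"
proof -
  have J: "star_jordan_n_derivation mul st ((n - 1) + length [x]) \<Phi>"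
    using assms by simp
  have "\<Phi> (jprod mul st [x]) = jprod mul st [\<Phi> half, x] + jprod mul st [\<Phi> x]"
    using star_jordan_n_derivation_replicate_half_append[OF J star_jordan_n_derivation_half_jbullet_half[OF assms]]
      assms(1) by simp
  then show ?thesis
    by (simp add: jprod_def)
qed

lemma star_jordan_derivation_of_n_derivation:
  assumes "2 \<le> n" and "star_jordan_n_derivation mul st n \<Phi>"
  shows "star_jordan_derivation sc mul st one \<Phi>"
proof -
  have "\<Phi> (a \<bullet> b) = \<Phi> a \<bullet> b + a \<bullet> \<Phi> b" for a b
  proof -
    have "(n - 2) + length [a, b] = n"
      using assms(1) by simp
    with assms(2) have J: "star_jordan_n_derivation mul st ((n - 2) + length [a, b]) \<Phi>"
      by simp
    have "\<Phi> (jprod mul st [a, b]) = (if n - 2 = 0 then 0 else jprod mul st [\<Phi> half, a, b])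
        + (jprod mul st [\<Phi> a, b] + jprod mul st [a, \<Phi> b])"
      using star_jordan_n_derivation_replicate_half_append[OF J star_jordan_n_derivation_half_jbullet_half[OF assms]]
      by simp
    moreover have "jprod mul st [\<Phi> half, a, b] = 0"
      using star_jordan_n_derivation_half_jbullet[OF assms] by (simp add: jprod_def)
    ultimately show ?thesis
      by (simp add: jprod_def)
  qed
  then show ?thesis
    by (simp add: star_jordan_derivation_def star_jordan_derivation_axioms_def alt_star_algebra_axioms)
qed

lemma star_jordan_2_derivation_of_additive_star_derivation:
  assumes "additive_star_derivation mul st \<Phi>"
  shows "star_jordan_n_derivation mul st 2 \<Phi>"
  unfolding star_jordan_n_derivation_def
proof (intro allI impI)
  fix as :: "'a list"
  assume "length as = 2"
  then obtain a b where as: "as = [a, b]"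
    by (metis One_nat_def Suc_1 length_0_conv length_Suc_conv)
  have "\<Phi> (a \<bullet> b) = \<Phi> a \<bullet> b + a \<bullet> \<Phi> b"
    using assms unfolding additive_star_derivation_def jbullet_def by (simp add: algebra_simps)
  then show "\<Phi> (jprod mul st as) = (\<Sum>k<2. jprod mul st (as[k := \<Phi> (as ! k)]))"
    by (simp add: as jprod_def numeral_2_eq_2)
qed

end

context star_jordan_derivation
begin

lemma Phi_zero [simp]: "\<Phi> 0 = 0"
  using jordan[of 0 0] by simp

definition additive_defect :: "'a \<Rightarrow> 'a \<Rightarrow> 'a"
  where "additive_defect x y = \<Phi> (x + y) - \<Phi> x - \<Phi> y"

lemma additive_defect_eq_0_iff: "additive_defect x y = 0 \<longleftrightarrow> \<Phi> (x + y) = \<Phi> x + \<Phi> y"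
  by (simp add: additive_defect_def diff_diff_eq)

lemma additive_defect_zero [simp]: "additive_defect 0 y = 0" "additive_defect x 0 = 0"
  by (simp_all add: additive_defect_def)

lemma jbullet_additive_defect: "c \<bullet> additive_defect x y = additive_defect (c \<bullet> x) (c \<bullet> y)"
  using jordan[of c "x + y"] jordan[of c x] jordan[of c y]
  by (simp add: additive_defect_def jbullet_add_left jbullet_add_right jbullet_diff_right algebra_simps)

lemma additive_defect_jbullet: "additive_defect x y \<bullet> c = additive_defect (x \<bullet> c) (y \<bullet> c)"
  using jordan[of "x + y" c] jordan[of x c] jordan[of y c]
  by (simp add: additive_defect_def jbullet_add_left jbullet_add_right jbullet_diff_left algebra_simps)

lemma Phi_i_one_jbullet: "\<Phi> (sc \<i> one) \<bullet> y = 0"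
proof -
  have "sc \<i> one \<bullet> z = 0" for z
    by (simp add: jbullet_def st_scale mul_scale_left mul_scale_right mul_minus_right)
  then show ?thesis
    using jordan[of "sc \<i> one" y] by simp
qed

end

locale additive_star_jordan_derivation = star_jordan_derivation + Phi: additive \<Phi>
begin

lemma Phi_one_jbullet: "\<Phi> one \<bullet> y = 0"
  using jordan[of one y] by (simp add: one_jbullet Phi.add)

lemma Phi_st:
  assumes "\<Phi> one = 0"
  shows "\<Phi> (st y) = st (\<Phi> y)"
  using jordan[of y one] by (simp add: assms jbullet_def Phi.add)

lemma Phi_i_scale:
  assumes "\<Phi> one = 0"
  shows "\<Phi> (sc \<i> x) = sc \<i> (\<Phi> x) + st x \<odot> \<Phi> (sc \<i> one)"
proof -
  define W where "W = \<Phi> (sc \<i> one)"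
  have W_central: "y \<odot> W = W \<odot> y" for y
    unfolding W_def using jbullet_annihilator(2)[OF Phi_i_one_jbullet] by simp
  have hermitian: "\<Phi> (sc \<i> (y + st y)) = sc \<i> (\<Phi> y + \<Phi> (st y)) + (y + st y) \<odot> W" for y
  proof -
    have "y \<bullet> sc \<i> one = sc \<i> (y + st y)"
      by (simp add: jbullet_def mul_scale_left mul_scale_right sc.scale_right_distrib)
    moreover have "\<Phi> y \<bullet> sc \<i> one = sc \<i> (\<Phi> y + \<Phi> (st y))"
      by (simp add: jbullet_def Phi_st[OF assms] mul_scale_left mul_scale_right sc.scale_right_distrib)
    moreover have "y \<bullet> W = (y + st y) \<odot> W"
      by (simp add: jbullet_def W_central mul_add_left mul_add_right)
    ultimately show ?thesis
      using jordan[of y "sc \<i> one"] by (simp add: W_def)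
  qed
  define A B U V where "A = \<Phi> (sc \<i> x)" and "B = \<Phi> (sc \<i> (st x))"
    and "U = \<Phi> x" and "V = \<Phi> (st x)"
  have sum: "A + B = sc \<i> (U + V) + (x + st x) \<odot> W"
    using hermitian[of x] by (simp add: A_def B_def U_def V_def Phi.add sc.scale_right_distrib)
  have "sc \<i> x + st (sc \<i> x) = sc \<i> (x - st x)"
    by (simp add: st_scale sc.scale_right_diff_distrib)
  then have "V - U = sc \<i> (A - B + (x - st x) \<odot> W)"
    using hermitian[of "sc \<i> x"]
    by (simp add: A_def B_def U_def V_def st_scale Phi.add Phi.diff Phi.minus mul_distribs
        sc.scale_right_diff_distrib sc.scale_right_distrib)
  then have "sc (- \<i>) (V - U) = A - B + (x - st x) \<odot> W"
    by simp
  then have difference: "A - B = sc \<i> (U - V) + (st x - x) \<odot> W"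
    by (simp add: mul_diff_left algebra_simps)
  have "(A - (sc \<i> U + st x \<odot> W)) + (A - (sc \<i> U + st x \<odot> W)) = 0"
    using arg_cong2[where f = "(+)", OF sum difference]
    by (simp add: mul_distribs algebra_simps)
  then show ?thesis
    by (simp add: add_self_eq_0_iff A_def U_def W_def)
qed

lemma Phi_mul:
  assumes "\<Phi> one = 0" and "\<Phi> (sc \<i> one) = 0"
  shows "\<Phi> (a \<odot> b) = \<Phi> a \<odot> b + a \<odot> \<Phi> b"
proof -
  have i_linear: "\<Phi> (sc \<i> x) = sc \<i> (\<Phi> x)" for x
    using Phi_i_scale[OF assms(1)] assms(2) by simp
  have i_jbullet: "sc \<i> x \<bullet> y = sc \<i> (x \<odot> y - y \<odot> st x)" for x y
    by (simp add: jbullet_def st_scale mul_scale_left mul_scale_right mul_minus_right sc.scale_right_diff_distrib)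
  have "\<Phi> (sc \<i> a \<bullet> b) = \<Phi> (sc \<i> a) \<bullet> b + sc \<i> a \<bullet> \<Phi> b"
    by (rule jordan)
  then have "sc \<i> (\<Phi> (a \<odot> b - b \<odot> st a))
      = sc \<i> (\<Phi> a \<odot> b - b \<odot> st (\<Phi> a) + (a \<odot> \<Phi> b - \<Phi> b \<odot> st a))"
    unfolding i_jbullet i_linear sc.scale_right_distrib .
  then have minus: "\<Phi> (a \<odot> b) - \<Phi> (b \<odot> st a) = \<Phi> a \<odot> b - b \<odot> st (\<Phi> a) + (a \<odot> \<Phi> b - \<Phi> b \<odot> st a)"
    by (simp add: Phi.diff)
  have plus: "\<Phi> (a \<odot> b) + \<Phi> (b \<odot> st a) = \<Phi> a \<odot> b + b \<odot> st (\<Phi> a) + (a \<odot> \<Phi> b + \<Phi> b \<odot> st a)"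
    using jordan[of a b] by (simp add: jbullet_def Phi.add)
  have "(\<Phi> (a \<odot> b) - (\<Phi> a \<odot> b + a \<odot> \<Phi> b)) + (\<Phi> (a \<odot> b) - (\<Phi> a \<odot> b + a \<odot> \<Phi> b)) = 0"
    using arg_cong2[where f = "(+)", OF minus plus] by (simp add: algebra_simps)
  then show ?thesis
    by (simp add: add_self_eq_0_iff)
qed

lemma additive_star_derivationI:
  assumes "\<Phi> one = 0" and "\<Phi> (sc \<i> one) = 0"
  shows "additive_star_derivation mul st \<Phi>"
  unfolding additive_star_derivation_def
  using Phi.add Phi_mul[OF assms] Phi_st[OF assms(1)] by blast

end

section \<open>Peirce decomposition\<close>

context alt_star_algebra
begin

definition right_faithful :: "'a \<Rightarrow> bool"
  where "right_faithful f \<longleftrightarrow> (\<forall>x. (\<forall>a. (x \<odot> a) \<odot> f = 0) \<longrightarrow> x = 0)"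

end

locale sym_idempotent = alt_star_algebra +
  fixes e :: 'a
  assumes idem: "e \<odot> e = e" and st_e: "st e = e"
begin

lemma e_mul_e_mul [simp]: "e \<odot> (e \<odot> x) = e \<odot> x"
  using left_alternative[of e x] by (simp add: idem)

lemma mul_e_mul_e [simp]: "(x \<odot> e) \<odot> e = x \<odot> e"
  using right_alternative[of x e] by (simp add: idem)

lemma e_mul_mul_e [simp]: "e \<odot> (x \<odot> e) = (e \<odot> x) \<odot> e"
  using flexible[of e x] by simp

lemma e_mul_left_peirce: "e \<odot> (x \<odot> y) = (e \<odot> x) \<odot> y + (x \<odot> e) \<odot> y - x \<odot> (e \<odot> y)"
  using left_alternative_linearized[of e x y] by (simp add: algebra_simps)

lemma e_mul_right_peirce: "(x \<odot> y) \<odot> e = x \<odot> (y \<odot> e) + x \<odot> (e \<odot> y) - (x \<odot> e) \<odot> y"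
  using right_alternative_linearized[of x y e] by (simp add: algebra_simps)

definition A11 :: "'a set" where "A11 = {x. e \<odot> x = x \<and> x \<odot> e = x}"
definition A12 :: "'a set" where "A12 = {x. e \<odot> x = x \<and> x \<odot> e = 0}"
definition A21 :: "'a set" where "A21 = {x. e \<odot> x = 0 \<and> x \<odot> e = x}"
definition A22 :: "'a set" where "A22 = {x. e \<odot> x = 0 \<and> x \<odot> e = 0}"

lemmas peirce_space_defs = A11_def A12_def A21_def A22_def

definition proj11 :: "'a \<Rightarrow> 'a" where "proj11 x = (e \<odot> x) \<odot> e"
definition proj12 :: "'a \<Rightarrow> 'a" where "proj12 x = e \<odot> x - (e \<odot> x) \<odot> e"
definition proj21 :: "'a \<Rightarrow> 'a" where "proj21 x = x \<odot> e - (e \<odot> x) \<odot> e"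
definition proj22 :: "'a \<Rightarrow> 'a" where "proj22 x = x - e \<odot> x - x \<odot> e + (e \<odot> x) \<odot> e"

lemmas proj_defs = proj11_def proj12_def proj21_def proj22_def

lemma peirce_decomposition: "x = proj11 x + proj12 x + proj21 x + proj22 x"
  by (simp add: proj_defs)

lemma peirce_space_zero [simp]: "0 \<in> A11" "0 \<in> A12" "0 \<in> A21" "0 \<in> A22"
  by (simp_all add: peirce_space_defs)

lemma peirce_space_add:
  "x \<in> A11 \<Longrightarrow> y \<in> A11 \<Longrightarrow> x + y \<in> A11" "x \<in> A12 \<Longrightarrow> y \<in> A12 \<Longrightarrow> x + y \<in> A12"
  "x \<in> A21 \<Longrightarrow> y \<in> A21 \<Longrightarrow> x + y \<in> A21" "x \<in> A22 \<Longrightarrow> y \<in> A22 \<Longrightarrow> x + y \<in> A22"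
  by (simp_all add: peirce_space_defs mul_distribs)

lemma proj_mem [simp]: "proj11 x \<in> A11" "proj12 x \<in> A12" "proj21 x \<in> A21" "proj22 x \<in> A22"
  by (simp_all add: proj_defs peirce_space_defs mul_distribs)

lemma proj_A11 [simp]: "x \<in> A11 \<Longrightarrow> proj11 x = x" "x \<in> A11 \<Longrightarrow> proj12 x = 0"
    "x \<in> A11 \<Longrightarrow> proj21 x = 0" "x \<in> A11 \<Longrightarrow> proj22 x = 0"
  and proj_A12 [simp]: "x \<in> A12 \<Longrightarrow> proj11 x = 0" "x \<in> A12 \<Longrightarrow> proj12 x = x"
    "x \<in> A12 \<Longrightarrow> proj21 x = 0" "x \<in> A12 \<Longrightarrow> proj22 x = 0"
  and proj_A21 [simp]: "x \<in> A21 \<Longrightarrow> proj11 x = 0" "x \<in> A21 \<Longrightarrow> proj12 x = 0"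
    "x \<in> A21 \<Longrightarrow> proj21 x = x" "x \<in> A21 \<Longrightarrow> proj22 x = 0"
  and proj_A22 [simp]: "x \<in> A22 \<Longrightarrow> proj11 x = 0" "x \<in> A22 \<Longrightarrow> proj12 x = 0"
    "x \<in> A22 \<Longrightarrow> proj21 x = 0" "x \<in> A22 \<Longrightarrow> proj22 x = x"
  by (simp_all add: proj_defs peirce_space_defs flip: e_mul_mul_e)

lemma proj_add [simp]: "proj11 (x + y) = proj11 x + proj11 y" "proj12 (x + y) = proj12 x + proj12 y"
    "proj21 (x + y) = proj21 x + proj21 y" "proj22 (x + y) = proj22 x + proj22 y"
  and proj_scale [simp]: "proj11 (sc c x) = sc c (proj11 x)" "proj12 (sc c x) = sc c (proj12 x)"
    "proj21 (sc c x) = sc c (proj21 x)" "proj22 (sc c x) = sc c (proj22 x)"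
  by (simp_all add: proj_defs mul_distribs algebra_simps)

lemma proj_diff [simp]: "proj11 (x - y) = proj11 x - proj11 y" "proj12 (x - y) = proj12 x - proj12 y"
    "proj21 (x - y) = proj21 x - proj21 y" "proj22 (x - y) = proj22 x - proj22 y"
  and proj_minus [simp]: "proj11 (- x) = - proj11 x" "proj12 (- x) = - proj12 x"
    "proj21 (- x) = - proj21 x" "proj22 (- x) = - proj22 x"
  by (simp_all add: proj_defs mul_distribs algebra_simps)

lemma proj_e_mul [simp]: "proj11 (e \<odot> x) = proj11 x" "proj12 (e \<odot> x) = proj12 x"
    "proj21 (e \<odot> x) = 0" "proj22 (e \<odot> x) = 0"
  and proj_mul_e [simp]: "proj11 (x \<odot> e) = proj11 x" "proj12 (x \<odot> e) = 0"
    "proj21 (x \<odot> e) = proj21 x" "proj22 (x \<odot> e) = 0"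
  by (simp_all add: proj_defs flip: e_mul_mul_e)

lemma proj_zero [simp]: "proj11 0 = 0" "proj12 0 = 0" "proj21 0 = 0" "proj22 0 = 0"
  by (simp_all add: proj_defs)

lemma proj_st: "proj11 (st x) = st (proj11 x)" "proj12 (st x) = st (proj21 x)"
    "proj21 (st x) = st (proj12 x)" "proj22 (st x) = st (proj22 x)"
  by (simp_all add: proj_defs st_mul st_diff st_add st_e flip: e_mul_mul_e)

lemma eq_0_of_proj_eq_0:
  "proj11 x = 0 \<Longrightarrow> proj12 x = 0 \<Longrightarrow> proj21 x = 0 \<Longrightarrow> proj22 x = 0 \<Longrightarrow> x = 0"
  using peirce_decomposition[of x] by simp

lemma proj12_proj21_eq_0_of_commute:
  assumes "e \<odot> w = w \<odot> e"
  shows "proj12 w = 0" and "proj21 w = 0"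
  using proj_e_mul(2,3)[of w] proj_mul_e(2,3)[of w] by (simp_all add: assms)

lemma eq_0_of_commute:
  "e \<odot> w = w \<odot> e \<Longrightarrow> proj11 w = 0 \<Longrightarrow> proj22 w = 0 \<Longrightarrow> w = 0"
  using eq_0_of_proj_eq_0 proj12_proj21_eq_0_of_commute by blast

lemma st_A11: "x \<in> A11 \<Longrightarrow> st x \<in> A11"
  and st_A12: "x \<in> A12 \<Longrightarrow> st x \<in> A21"
  and st_A21: "x \<in> A21 \<Longrightarrow> st x \<in> A12"
  by (simp_all add: peirce_space_defs) (metis st_mul st_e st_zero)+

lemma e_mem_A11 [simp]: "e \<in> A11"
  by (simp add: A11_def idem)

lemma compl_mem_A22 [simp]: "one - e \<in> A22"
  by (simp add: A22_def mul_distribs idem)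

lemma eq_0_of_e_mul_eq_double: "e \<odot> z = z + z \<Longrightarrow> z = 0"
  using e_mul_e_mul[of z] by (simp add: mul_add_right add_self_eq_0_iff)

lemma eq_0_of_e_mul_eq_minus:
  assumes "e \<odot> z = - z"
  shows "z = 0"
proof -
  have "- z = z"
    using e_mul_e_mul[of z] by (simp add: assms mul_minus_right)
  then show ?thesis
    by (metis add.left_inverse add_self_eq_0_iff)
qed

lemma eq_0_of_mul_e_eq_double: "z \<odot> e = z + z \<Longrightarrow> z = 0"
  using mul_e_mul_e[of z] by (simp add: mul_add_left add_self_eq_0_iff)

lemma eq_0_of_mul_e_eq_minus:
  assumes "z \<odot> e = - z"
  shows "z = 0"
proof -
  have "- z = z"
    using mul_e_mul_e[of z] by (simp add: assms mul_minus_left)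
  then show ?thesis
    by (metis add.left_inverse add_self_eq_0_iff)
qed

lemma mul_A11_A11: "x \<in> A11 \<Longrightarrow> y \<in> A11 \<Longrightarrow> x \<odot> y \<in> A11"
  and mul_A11_A12: "x \<in> A11 \<Longrightarrow> y \<in> A12 \<Longrightarrow> x \<odot> y \<in> A12"
  and mul_A12_A12: "x \<in> A12 \<Longrightarrow> y \<in> A12 \<Longrightarrow> x \<odot> y \<in> A21"
  and mul_A12_A21: "x \<in> A12 \<Longrightarrow> y \<in> A21 \<Longrightarrow> x \<odot> y \<in> A11"
  and mul_A12_A22: "x \<in> A12 \<Longrightarrow> y \<in> A22 \<Longrightarrow> x \<odot> y \<in> A12"
  and mul_A21_A11: "x \<in> A21 \<Longrightarrow> y \<in> A11 \<Longrightarrow> x \<odot> y \<in> A21"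
  and mul_A21_A12: "x \<in> A21 \<Longrightarrow> y \<in> A12 \<Longrightarrow> x \<odot> y \<in> A22"
  and mul_A21_A21: "x \<in> A21 \<Longrightarrow> y \<in> A21 \<Longrightarrow> x \<odot> y \<in> A12"
  by (simp_all add: peirce_space_defs e_mul_left_peirce e_mul_right_peirce)

lemma mul_A11_A21: "x \<in> A11 \<Longrightarrow> y \<in> A21 \<Longrightarrow> x \<odot> y = 0"
  and mul_A11_A22: "x \<in> A11 \<Longrightarrow> y \<in> A22 \<Longrightarrow> x \<odot> y = 0"
  and mul_A22_A12: "x \<in> A22 \<Longrightarrow> y \<in> A12 \<Longrightarrow> x \<odot> y = 0"
  using e_mul_left_peirce[of x y]
  by (auto simp: peirce_space_defs intro: eq_0_of_e_mul_eq_double eq_0_of_e_mul_eq_minus)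

lemma mul_A12_A11: "x \<in> A12 \<Longrightarrow> y \<in> A11 \<Longrightarrow> x \<odot> y = 0"
  and mul_A21_A22: "x \<in> A21 \<Longrightarrow> y \<in> A22 \<Longrightarrow> x \<odot> y = 0"
  using e_mul_right_peirce[of x y]
  by (auto simp: peirce_space_defs intro: eq_0_of_mul_e_eq_double eq_0_of_mul_e_eq_minus)

lemma proj12_mul_A12:
  assumes "p \<in> A12"
  shows "proj12 (x \<odot> p) = proj11 x \<odot> p"
proof -
  have "x \<odot> p = proj11 x \<odot> p + proj12 x \<odot> p + proj21 x \<odot> p + proj22 x \<odot> p"
    by (subst peirce_decomposition[of x]) (simp add: mul_add_left)
  then show ?thesis
    using assms by (simp add: mul_A11_A12 mul_A12_A12 mul_A21_A12 mul_A22_A12)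
qed

lemma proj12_A12_mul:
  assumes "p \<in> A12"
  shows "proj12 (p \<odot> y) = p \<odot> proj22 y"
proof -
  have "p \<odot> y = p \<odot> proj11 y + p \<odot> proj12 y + p \<odot> proj21 y + p \<odot> proj22 y"
    by (subst peirce_decomposition[of y]) (simp add: mul_add_right)
  then show ?thesis
    using assms by (simp add: mul_A12_A11 mul_A12_A12 mul_A12_A21 mul_A12_A22)
qed

lemma proj12_A21_mul:
  assumes "q \<in> A21"
  shows "proj12 (q \<odot> y) = q \<odot> proj21 y"
proof -
  have "q \<odot> y = q \<odot> proj11 y + q \<odot> proj12 y + q \<odot> proj21 y + q \<odot> proj22 y"
    by (subst peirce_decomposition[of y]) (simp add: mul_add_right)
  then show ?thesis
    using assms by (simp add: mul_A21_A11 mul_A21_A12 mul_A21_A21 mul_A21_A22)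
qed

lemma A11_eq_0_of_mul_A12:
  assumes "right_faithful (one - e)" and z: "z \<in> A11" and "\<And>c. c \<in> A12 \<Longrightarrow> z \<odot> c = 0"
  shows "z = 0"
proof -
  have "(z \<odot> a) \<odot> (one - e) = 0" for a
  proof -
    have "z \<odot> a = z \<odot> proj11 a"
      using peirce_decomposition[of a] assms(3)[of "proj12 a"] mul_A11_A21[OF z] mul_A11_A22[OF z]
      by (metis add.right_neutral mul_add_right proj_mem)
    moreover have "z \<odot> proj11 a \<in> A11"
      using z by (simp add: mul_A11_A11)
    ultimately show ?thesis
      by (simp add: A11_def mul_diff_right)
  qed
  with assms(1) show ?thesis
    unfolding right_faithful_def by blast
qed

lemma e_jbullet_A11: "x \<in> A11 \<Longrightarrow> e \<bullet> x = x + x"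
  and e_jbullet_A22: "x \<in> A22 \<Longrightarrow> e \<bullet> x = 0"
  and compl_jbullet_A11: "x \<in> A11 \<Longrightarrow> (one - e) \<bullet> x = 0"
  and compl_jbullet_A22: "x \<in> A22 \<Longrightarrow> (one - e) \<bullet> x = x + x"
  by (simp_all add: peirce_space_defs jbullet_def st_e st_diff mul_distribs)

lemma A12_jbullet_e: "x \<in> A12 \<Longrightarrow> x \<bullet> e = 0"
  and A21_jbullet_e: "x \<in> A21 \<Longrightarrow> x \<bullet> e = x + st x"
  and A12_jbullet_compl: "x \<in> A12 \<Longrightarrow> x \<bullet> (one - e) = x + st x"
  and A21_jbullet_compl: "x \<in> A21 \<Longrightarrow> x \<bullet> (one - e) = 0"
  using st_A12[of x] st_A21[of x]
  by (simp_all add: peirce_space_defs jbullet_def mul_distribs)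

lemma compl_jbullet: "(one - e) \<bullet> x = proj12 x + proj21 x + (proj22 x + proj22 x)"
  by (simp add: jbullet_def st_diff st_e proj_defs mul_distribs algebra_simps)

lemma A11_of_compl_jbullet_eq_0:
  assumes "(one - e) \<bullet> x = 0"
  shows "x \<in> A11"
proof -
  have "proj12 x = 0" "proj21 x = 0" "proj22 x = 0"
    using arg_cong[OF assms, of proj12] arg_cong[OF assms, of proj21] arg_cong[OF assms, of proj22]
    by (simp_all add: compl_jbullet add_self_eq_0_iff)
  then show ?thesis
    using peirce_decomposition[of x] proj_mem(1)[of x] by simp
qed

lemma A11_jbullet_A12: "x \<in> A11 \<Longrightarrow> c \<in> A12 \<Longrightarrow> x \<bullet> c = x \<odot> c"
  by (simp add: jbullet_def mul_A12_A11 st_A11)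

lemma eq_0_of_e_jbullet: "e \<bullet> x = 0 \<Longrightarrow> (one - e) \<bullet> x = 0 \<Longrightarrow> x = 0"
  using jbullet_diff_left[of one e x] by (simp add: one_jbullet add_self_eq_0_iff)

lemma proj21_jbullet_e: "proj21 (x \<bullet> e) = proj21 x"
  and proj12_jbullet_compl: "proj12 (x \<bullet> (one - e)) = proj12 x"
  by (simp_all add: jbullet_def mul_distribs)

abbreviation reflection :: 'a
  where "reflection \<equiv> e + e - one"

lemma reflection_jbullet: "reflection \<bullet> x = (proj11 x + proj11 x) - (proj22 x + proj22 x)"
  by (simp add: jbullet_def st_add st_diff st_e proj_defs mul_distribs algebra_simps)

lemma i_reflection_jbullet:
  "sc \<i> reflection \<bullet> x = sc \<i> (proj12 x + proj12 x) - sc \<i> (proj21 x + proj21 x)"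
  by (simp add: jbullet_def st_scale st_add st_diff st_e proj_defs mul_distribs algebra_simps)

lemma proj11_proj22_eq_0_of_reflection_jbullet:
  assumes "reflection \<bullet> x = 0"
  shows "proj11 x = 0" and "proj22 x = 0"
  using arg_cong[OF assms, of proj11] arg_cong[OF assms, of proj22]
  by (simp_all add: reflection_jbullet add_self_eq_0_iff neg_eq_iff_add_eq_0)

lemma proj12_proj21_eq_0_of_i_reflection_jbullet:
  assumes "sc \<i> reflection \<bullet> x = 0"
  shows "proj12 x = 0" and "proj21 x = 0"
  using arg_cong[OF assms, of proj12] arg_cong[OF assms, of proj21]
  by (simp_all add: i_reflection_jbullet add_self_eq_0_iff)

end

section \<open>Additivity\<close>

locale peirce_jordan_derivation = sym_idempotent + star_jordan_derivation
begin

lemma Phi_add_A11_A22: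
  assumes "a \<in> A11" and "b \<in> A22"
  shows "\<Phi> (a + b) = \<Phi> a + \<Phi> b"
proof -
  have "e \<bullet> additive_defect a b = 0" and "(one - e) \<bullet> additive_defect a b = 0"
    using assms
    by (simp_all add: jbullet_additive_defect e_jbullet_A11 e_jbullet_A22 compl_jbullet_A11
        compl_jbullet_A22)
  then show ?thesis
    by (simp add: eq_0_of_e_jbullet flip: additive_defect_eq_0_iff)
qed

lemma Phi_add_A12_A21:
  assumes "a \<in> A12" and "b \<in> A21"
  shows "\<Phi> (a + b) = \<Phi> a + \<Phi> b"
proof -
  let ?T = "additive_defect a b"
  have "reflection \<bullet> ?T = 0"
    using assms by (simp add: jbullet_additive_defect reflection_jbullet)
  then have "proj11 ?T = 0" and "proj22 ?T = 0"
    by (rule proj11_proj22_eq_0_of_reflection_jbullet)+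
  moreover have "?T \<bullet> e = 0"
    using assms by (simp add: additive_defect_jbullet A12_jbullet_e A21_jbullet_e)
  then have "proj21 ?T = 0"
    using proj21_jbullet_e[of ?T] by simp
  moreover have "?T \<bullet> (one - e) = 0"
    using assms by (simp add: additive_defect_jbullet A12_jbullet_compl A21_jbullet_compl)
  then have "proj12 ?T = 0"
    using proj12_jbullet_compl[of ?T] by simp
  ultimately show ?thesis
    using eq_0_of_proj_eq_0 additive_defect_eq_0_iff by blast
qed

lemma Phi_peirce: "\<Phi> x = \<Phi> (proj11 x) + \<Phi> (proj12 x) + \<Phi> (proj21 x) + \<Phi> (proj22 x)"
proof -
  define a b where "a = proj11 x + proj22 x" and "b = proj12 x + proj21 x"
  let ?T = "additive_defect a b"
  have "reflection \<bullet> ?T = 0"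
    by (simp add: a_def b_def jbullet_additive_defect reflection_jbullet)
  moreover have "sc \<i> reflection \<bullet> ?T = 0"
    by (simp add: a_def b_def jbullet_additive_defect i_reflection_jbullet)
  ultimately have "?T = 0"
    using eq_0_of_proj_eq_0 proj11_proj22_eq_0_of_reflection_jbullet
      proj12_proj21_eq_0_of_i_reflection_jbullet by blast
  moreover have "x = a + b"
    by (simp add: a_def b_def proj_defs)
  ultimately have "\<Phi> x = \<Phi> a + \<Phi> b"
    by (simp add: additive_defect_eq_0_iff)
  then show ?thesis
    by (simp add: a_def b_def Phi_add_A11_A22 Phi_add_A12_A21 algebra_simps)
qed

lemma Phi_add_peirce:
  assumes "a \<in> A11" and "b \<in> A12" and "c \<in> A21" and "d \<in> A22"
  shows "\<Phi> (a + b + c + d) = \<Phi> a + \<Phi> b + \<Phi> c + \<Phi> d"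
  using Phi_peirce[of "a + b + c + d"] assms by simp

lemma e_plus_jbullet_plus_compl:
  assumes "p \<in> A12" and "q \<in> A12"
  shows "(e + p) \<bullet> (q + (one - e)) = q \<odot> st p + (p + q) + (st p + p \<odot> q)"
  using assms st_A12[OF assms(1)]
  by (simp add: peirce_space_defs jbullet_def st_add st_diff st_e idem mul_distribs algebra_simps)

(* Expand \<Phi> ((e + p) \<bullet> (q + (1 - e))) once over the Peirce components of the product and once
   by the Jordan identity. *)
lemma additive_defect_A12_cancel:
  assumes p: "p \<in> A12" and q: "q \<in> A12"
  shows "additive_defect p q + additive_defect (st p) (p \<odot> q) = 0"
proof -
  have sp: "st p \<in> A21" and pq: "p \<odot> q \<in> A21" and qp: "q \<odot> st p \<in> A11"
    using p q by (simp_all add: st_A12 mul_A12_A12 mul_A12_A21)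
  have Phi_e_p: "\<Phi> (e + p) = \<Phi> e + \<Phi> p"
    using Phi_add_peirce[of e p 0 0] p by simp
  have Phi_q_compl: "\<Phi> (q + (one - e)) = \<Phi> q + \<Phi> (one - e)"
    using Phi_add_peirce[of 0 q 0 "one - e"] q by simp
  have "\<Phi> (q \<odot> st p) + \<Phi> (p + q) + \<Phi> (st p + p \<odot> q) = \<Phi> ((e + p) \<bullet> (q + (one - e)))"
    using Phi_add_peirce[OF qp peirce_space_add(2)[OF p q] peirce_space_add(3)[OF sp pq] peirce_space_zero(4)]
    by (simp add: e_plus_jbullet_plus_compl p q)
  also have "\<dots> = \<Phi> (e + p) \<bullet> (q + (one - e)) + (e + p) \<bullet> \<Phi> (q + (one - e))"
    by (rule jordan)
  also have "\<dots> = (\<Phi> e \<bullet> q + e \<bullet> \<Phi> q) + (\<Phi> e \<bullet> (one - e) + e \<bullet> \<Phi> (one - e))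
      + (\<Phi> p \<bullet> q + p \<bullet> \<Phi> q) + (\<Phi> p \<bullet> (one - e) + p \<bullet> \<Phi> (one - e))"
    unfolding Phi_e_p Phi_q_compl jbullet_add_left jbullet_add_right by (simp add: algebra_simps)
  also have "\<dots> = \<Phi> (e \<bullet> q) + \<Phi> (e \<bullet> (one - e)) + \<Phi> (p \<bullet> q) + \<Phi> (p \<bullet> (one - e))"
    by (simp only: jordan)
  also have "\<dots> = \<Phi> q + (\<Phi> (q \<odot> st p) + \<Phi> (p \<odot> q)) + (\<Phi> p + \<Phi> (st p))"
  proof -
    have "e \<bullet> q = q" and "e \<bullet> (one - e) = 0"
      using q by (simp_all add: A12_def jbullet_def st_e idem mul_distribs)
    moreover have "p \<bullet> q = q \<odot> st p + 0 + p \<odot> q + 0"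
      by (simp add: jbullet_def add.commute)
    moreover have "p \<bullet> (one - e) = p + st p"
      using p by (rule A12_jbullet_compl)
    ultimately show ?thesis
      using Phi_add_peirce[OF qp peirce_space_zero(2) pq peirce_space_zero(4)] Phi_add_A12_A21[OF p sp]
      by simp
  qed
  finally show ?thesis
    by (simp add: additive_defect_def algebra_simps)
qed

lemma Phi_add_A12:
  assumes p: "p \<in> A12" and q: "q \<in> A12"
  shows "\<Phi> (p + q) = \<Phi> p + \<Phi> q"
proof -
  let ?T = "additive_defect p q" and ?S = "additive_defect (st p) (p \<odot> q)"
  have "reflection \<bullet> ?T = 0"
    using assms by (simp add: jbullet_additive_defect reflection_jbullet)
  then have "proj11 ?T = 0" and "proj22 ?T = 0"
    by (rule proj11_proj22_eq_0_of_reflection_jbullet)+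
  moreover have "?T \<bullet> e = 0"
    using assms by (simp add: additive_defect_jbullet A12_jbullet_e)
  then have "proj21 ?T = 0"
    using proj21_jbullet_e[of ?T] by simp
  moreover have "?S \<bullet> (one - e) = 0"
    using assms by (simp add: additive_defect_jbullet A21_jbullet_compl st_A12 mul_A12_A12)
  then have "proj12 ?S = 0"
    using proj12_jbullet_compl[of ?S] by simp
  then have "proj12 ?T = 0"
    using arg_cong[OF additive_defect_A12_cancel[OF assms], of proj12] by simp
  ultimately show ?thesis
    using eq_0_of_proj_eq_0 additive_defect_eq_0_iff by blast
qed

lemma Phi_add_A11:
  assumes "right_faithful (one - e)" and a: "a \<in> A11" and b: "b \<in> A11"
  shows "\<Phi> (a + b) = \<Phi> a + \<Phi> b"
proof -
  let ?T = "additive_defect a b"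
  have "(one - e) \<bullet> ?T = 0"
    using a b by (simp add: jbullet_additive_defect compl_jbullet_A11)
  then have T: "?T \<in> A11"
    by (rule A11_of_compl_jbullet_eq_0)
  have "?T \<odot> c = 0" if c: "c \<in> A12" for c
  proof -
    have "?T \<odot> c = ?T \<bullet> c"
      using T c by (simp add: A11_jbullet_A12)
    also have "\<dots> = additive_defect (a \<odot> c) (b \<odot> c)"
      using a b c by (simp add: additive_defect_jbullet A11_jbullet_A12)
    also have "\<dots> = 0"
      using a b c by (simp add: additive_defect_eq_0_iff Phi_add_A12 mul_A11_A12)
    finally show ?thesis .
  qed
  then have "?T = 0"
    using A11_eq_0_of_mul_A12[OF assms(1) T] by blast
  then show ?thesis
    by (simp add: additive_defect_eq_0_iff)
qed

end

section \<open>The values at 1 and i 1\<close>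

locale additive_peirce_jordan_derivation =
  peirce_jordan_derivation + additive_star_jordan_derivation
begin

lemma proj22_Phi_e: "proj22 (\<Phi> e) = 0"
proof -
  have "\<Phi> e + \<Phi> e = \<Phi> e \<odot> e + e \<odot> st (\<Phi> e) + (e \<odot> \<Phi> e + \<Phi> e \<odot> e)"
    using jordan[of e e] by (simp add: jbullet_def st_e idem Phi.add)
  then have "proj22 (\<Phi> e + \<Phi> e) = proj22 (\<Phi> e \<odot> e + e \<odot> st (\<Phi> e) + (e \<odot> \<Phi> e + \<Phi> e \<odot> e))"
    by (rule arg_cong)
  then show ?thesis
    by (simp add: add_self_eq_0_iff)
qed

lemma proj11_Phi_e:
  assumes "right_faithful (one - e)"
  shows "proj11 (\<Phi> e) = 0"
proof (rule A11_eq_0_of_mul_A12[OF assms proj_mem(1)])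
  fix p
  assume p: "p \<in> A12"
  then have "e \<bullet> p = p"
    by (simp add: A12_def jbullet_def st_e)
  then have "\<Phi> p = \<Phi> e \<odot> p + p \<odot> st (\<Phi> e) + (e \<odot> \<Phi> p + \<Phi> p \<odot> e)"
    using jordan[of e p] by (simp add: jbullet_def st_e)
  then have "proj12 (\<Phi> p) = proj12 (\<Phi> e \<odot> p + p \<odot> st (\<Phi> e) + (e \<odot> \<Phi> p + \<Phi> p \<odot> e))"
    by (rule arg_cong)
  then show "proj11 (\<Phi> e) \<odot> p = 0"
    using p by (simp add: proj12_mul_A12 proj12_A12_mul proj_st proj22_Phi_e)
qed

lemma proj11_Phi_one:
  assumes "right_faithful (one - e)"
  shows "proj11 (\<Phi> one) = 0"
proof -
  have "\<Phi> e + \<Phi> e = \<Phi> e + st (\<Phi> e) + (e \<odot> \<Phi> one + \<Phi> one \<odot> e)"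
    using jordan[of e one] by (simp add: jbullet_def st_e Phi.add)
  then have "proj11 (\<Phi> e + \<Phi> e) = proj11 (\<Phi> e + st (\<Phi> e) + (e \<odot> \<Phi> one + \<Phi> one \<odot> e))"
    by (rule arg_cong)
  then show ?thesis
    by (simp add: proj_st proj11_Phi_e[OF assms] add_self_eq_0_iff)
qed

lemma proj11_Phi_i_one:
  assumes "right_faithful (one - e)" and "\<Phi> one = 0"
  shows "proj11 (\<Phi> (sc \<i> one)) = 0"
proof (rule A11_eq_0_of_mul_A12[OF assms(1) proj_mem(1)])
  fix p
  assume p: "p \<in> A12"
  define W Y where "W = \<Phi> (sc \<i> one)" and "Y = \<Phi> (sc \<i> e)"
  have "proj21 W = 0"
    using proj12_proj21_eq_0_of_commute jbullet_annihilator(2)[OF Phi_i_one_jbullet]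
    by (simp add: W_def)
  have Y: "Y = sc \<i> (\<Phi> e) + e \<odot> W"
    using Phi_i_scale[OF assms(2), of e] by (simp add: W_def Y_def st_e)
  have "sc \<i> e \<bullet> p = sc \<i> p"
    using p by (simp add: A12_def jbullet_def st_scale st_e mul_scale_left mul_scale_right mul_minus_right)
  then have "sc \<i> (\<Phi> p) + st p \<odot> W = Y \<odot> p + p \<odot> st Y + sc \<i> e \<bullet> \<Phi> p"
    using jordan[of "sc \<i> e" p] Phi_i_scale[OF assms(2), of p]
    by (simp add: W_def Y_def jbullet_def)
  then have "proj12 (sc \<i> (\<Phi> p) + st p \<odot> W) = proj12 (Y \<odot> p + p \<odot> st Y + sc \<i> e \<bullet> \<Phi> p)"
    by (rule arg_cong)
  then show "proj11 (\<Phi> (sc \<i> one)) \<odot> p = 0"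
    using p \<open>proj21 W = 0\<close> proj11_Phi_e[OF assms(1)] proj22_Phi_e
    by (simp add: proj12_mul_A12 proj12_A12_mul proj12_A21_mul st_A12 proj_st Y
        jbullet_def st_scale st_e mul_scale_left mul_scale_right mul_minus_right W_def)
qed

end

locale faithful_peirce_jordan_derivation = peirce_jordan_derivation +
  assumes right_faithful_e: "right_faithful e"
    and right_faithful_compl: "right_faithful (one - e)"

sublocale faithful_peirce_jordan_derivation \<subseteq> compl: peirce_jordan_derivation sc mul st one "one - e" \<Phi>
  by unfold_locales (simp_all add: idem st_e st_diff mul_distribs)

context faithful_peirce_jordan_derivation
begin

lemma compl_peirce_space [simp]:
  "compl.A11 = A22" "compl.A12 = A21" "compl.A21 = A12" "compl.A22 = A11"
  by (auto simp: compl.peirce_space_defs peirce_space_defs mul_distribs)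

lemma compl_proj11 [simp]: "compl.proj11 x = proj22 x"
  by (simp add: compl.proj11_def proj22_def mul_distribs algebra_simps)

lemma Phi_add: "\<Phi> (x + y) = \<Phi> x + \<Phi> y"
proof -
  have "\<Phi> (x + y) = \<Phi> (proj11 x + proj11 y) + \<Phi> (proj12 x + proj12 y)
      + \<Phi> (proj21 x + proj21 y) + \<Phi> (proj22 x + proj22 y)"
    using Phi_peirce[of "x + y"] by simp
  also have "\<dots> = (\<Phi> (proj11 x) + \<Phi> (proj12 x) + \<Phi> (proj21 x) + \<Phi> (proj22 x))
      + (\<Phi> (proj11 y) + \<Phi> (proj12 y) + \<Phi> (proj21 y) + \<Phi> (proj22 y))"
    using Phi_add_A11[OF right_faithful_compl] Phi_add_A12 compl.Phi_add_A12
      compl.Phi_add_A11 right_faithful_e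
    by (simp add: algebra_simps)
  also have "\<dots> = \<Phi> x + \<Phi> y"
    using Phi_peirce[of x] Phi_peirce[of y] by simp
  finally show ?thesis .
qed

sublocale additive_peirce_jordan_derivation
  by unfold_locales (rule Phi_add)

sublocale compl: additive_peirce_jordan_derivation sc mul st one "one - e" \<Phi>
  by unfold_locales (simp_all add: idem st_e st_diff mul_distribs Phi_add)

lemma Phi_one: "\<Phi> one = 0"
proof (rule eq_0_of_commute)
  show "e \<odot> \<Phi> one = \<Phi> one \<odot> e"
    using jbullet_annihilator(2)[OF Phi_one_jbullet] by simp
  show "proj11 (\<Phi> one) = 0"
    using right_faithful_compl by (rule proj11_Phi_one)
  show "proj22 (\<Phi> one) = 0"
    using compl.proj11_Phi_one right_faithful_e by simp
qed

lemma Phi_i_one: "\<Phi> (sc \<i> one) = 0"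
proof (rule eq_0_of_commute)
  show "e \<odot> \<Phi> (sc \<i> one) = \<Phi> (sc \<i> one) \<odot> e"
    using jbullet_annihilator(2)[OF Phi_i_one_jbullet] by simp
  show "proj11 (\<Phi> (sc \<i> one)) = 0"
    using right_faithful_compl Phi_one by (rule proj11_Phi_i_one)
  show "proj22 (\<Phi> (sc \<i> one)) = 0"
    using compl.proj11_Phi_i_one right_faithful_e Phi_one by simp
qed

lemma additive_star_derivation_Phi: "additive_star_derivation mul st \<Phi>"
  using Phi_one Phi_i_one by (rule additive_star_derivationI)

end

theorem corollary1:
  fixes sc :: "complex \<Rightarrow> 'a::ab_group_add \<Rightarrow> 'a"
    and mul :: "'a \<Rightarrow> 'a \<Rightarrow> 'a" and st :: "'a \<Rightarrow> 'a"
    and one e :: 'a and \<Phi> :: "'a \<Rightarrow> 'a"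
  assumes "unital_alt_star_algebra sc mul st one"
    and "mul e e = e" and "st e = e" and "e \<noteq> 0" and "e \<noteq> one"
    and "\<And>x. (\<forall>a. mul (mul x a) e = 0) \<Longrightarrow> x = 0"
    and "\<And>x. (\<forall>a. mul (mul x a) (one - e) = 0) \<Longrightarrow> x = 0"
  shows "star_jordan_type_derivation mul st \<Phi> \<longleftrightarrow> additive_star_derivation mul st \<Phi>"
proof -
  interpret alt_star_algebra sc mul st one
    using assms(1) by (rule alt_star_algebra.intro)
  show ?thesis
  proof
    assume "star_jordan_type_derivation mul st \<Phi>"
    then obtain n where "2 \<le> n" and "star_jordan_n_derivation mul st n \<Phi>"
      unfolding star_jordan_type_derivation_def by blast
    then interpret star_jordan_derivation sc mul st one \<Phi>
      by (rule star_jordan_derivation_of_n_derivation)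
    have "right_faithful e" and "right_faithful (one - e)"
      using assms(6,7) unfolding right_faithful_def by blast+
    then interpret faithful_peirce_jordan_derivation sc mul st one e \<Phi>
      using assms(2,3) by unfold_locales
    show "additive_star_derivation mul st \<Phi>"
      by (rule additive_star_derivation_Phi)
  next
    assume "additive_star_derivation mul st \<Phi>"
    then have "star_jordan_n_derivation mul st 2 \<Phi>"
      by (rule star_jordan_2_derivation_of_additive_star_derivation)
    then show "star_jordan_type_derivation mul st \<Phi>"
      unfolding star_jordan_type_derivation_def by blast
  qed
qed

end
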